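(* Let $\sigma$ be a vocabulary, $\mathcal C$ a class of constraints over a specification $\langle V,D\rangle$ with $D\subseteq\mathbb R$, $\gamma:\sigma_c\to\mathcal C$ a denotation, and $P'$ a CAS program over $\sigma,\mathcal C,\gamma$. Let $P$ be $P'$ extended with a minimize statement $\$minimize\{b_1 x_1+c_1@l_1,\dots,b_n x_n+c_n@l_n\}$ (integers $b_i,c_i$, variables $x_i\in V$, positive integer levels $l_i$, and $x_i\neq x_j$ whenever $i\neq j$ and $l_i=l_j$). Let $S$ be the set of ew-conditions $\{(T,w_l@l),\ (T,0;\vec c_l@l) : l\in\{l_1,\dots,l_n\}\}$, where $T=T_{\sigma,V,D}$, $w_l=\sum_{i:l_i=l}c_i$, and $\vec c_l:V\to\mathbb Z$ maps $x_i$ to $b_i$ for each $i$ with $l_i=l$ and every other variable to $0$. Then for every $(X,\nu)\in\mathit{Int}(\sigma,V,D)$: $(X,\nu)$ is a min-optimal extended model of the ew-system $(P',S)$ (with $P'$ viewed as an e-module of the CAS-logic over $\sigma,\mathcal C,\gamma$) if and only if $(X,\nu)$ is an optimal extended answer set of $P$.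
   Context: Standing definitions. A vocabulary is a set of atoms; an interpretation over a vocabulary $\sigma$ is a subset of $\sigma$. For a set $V$ of variables and a set $D$ of values, an evaluation is a function $\nu:V\to D$. An extended interpretation over $\sigma,V,D$ is a pair $(I,\nu)$ with $I\subseteq\sigma$ and $\nu:V\to D$; $\mathit{Int}(\sigma,V,D)$ denotes the set of all of them. For an interpretation $I$ and a vocabulary $\sigma'$, $I_{|\sigma'}=I\cap\sigma'$; for an evaluation $\nu$ defined on a superset of $V'$, $\nu_{|V'}$ is its restriction to $V'$. An extended logic (e-logic) is a tuple $(L,\sigma,\Delta,\Upsilon,\mathit{sem})$ where $L$ is a set (of formulas), $\sigma$ a vocabulary, $\Delta$ a set of values (the domain), $\Upsilon$ a set of variables, and $\mathit{sem}$ assigns to every subset $T\subseteq L$ a set $\mathit{sem}(T)\subseteq\mathit{Int}(\sigma,\Upsilon,\Delta)$. A subset $T\subseteq L$ is called an e-module (theory) of this e-logic; $\sigma_T,\Delta_T,\Upsilon_T,\mathit{sem}_T$ denote the corresponding components of its e-logic. For an extended interpretation $(I,\nu)$ over $\sigma,V,D$ with $\sigma_T\subseteq\sigma$, $\Upsilon_T\subseteq V$, $\Delta_T\subseteq D$: $(I,\nu)$ is an extended model of $T$, written $(I,\nu)\models T$, iff $(I_{|\sigma_T},\nu_{|\Upsilon_T})\in\mathit{sem}_T$; $I$ is a model of $T$ iff $(I,\nu)\models T$ for some such $\nu$. Two e-modules are coherent if their domains are equal whenever their variable sets intersect. An EAMS $\mathcal H$ is a set of pairwise coherent e-modules (possibly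 of different e-logics); $\sigma_{\mathcal H},\Upsilon_{\mathcal H},\Delta_{\mathcal H}$ are the unions of the vocabularies, variable sets and domains of its modules. An element $(I,\nu)\in\mathit{Int}(\sigma_{\mathcal H},\Upsilon_{\mathcal H},\Delta_{\mathcal H})$ is an extended model of $\mathcal H$ iff it is an extended model of every module of $\mathcal H$; $I$ is a model of $\mathcal H$ iff $(I,\nu)$ is an extended model of $\mathcal H$ for some $\nu$. A single e-module $T$ is identified with the EAMS $\{T\}$. An ew-condition is $B=(T,w;\vec c@l)$ with $T$ an e-module, $w\in\mathbb Z$ (weight), $\vec c:\Upsilon_T\to\mathbb R$ (coefficients function), and $l$ a positive integer (level); $\sigma_B=\sigma_T$, $\Upsilon_B=\Upsilon_T$, $\Delta_B=\Delta_T$. The notation $(T,w@l)$ denotes an ew-condition whose coefficients function is empty or identically $0$. $(I,\nu)\models B$ iff $(I,\nu)\models T$, and $I\models B$ iff $I$ is a model of $T$. Costs: $[(I,\nu)\models B]=\sum_{x\in\Upsilon_B}\nu(x)\vec c(x)$ if $(I,\nu)\models B$ and $0$ otherwise (this is $0$ when $\vec c\equiv0$; otherwise domains are taken to be sets of reals and the sum finite); $[I\models B]=w$ if $I\models B$ and $0$ otherwise. An ew-condition $(T,w;\vec c@l)$ is coherent with an EAMS $\mathcal H$ if $\sigma_T\subseteq\sigma_{\mathcal H}$, $\Upsilon_T\subseteq\Upsilon_{\mathcal H}$, and $\Delta_T=\Delta_H$ for every module $H\in\mathcal H$ with $\Upsilon_T\cap\Upsilon_H\neq\emptyset$. An ew-system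 is a pair $\mathcal W=(\mathcal H,\mathcal Z)$ with $\mathcal H$ an EAMS and $\mathcal Z$ a finite set of ew-conditions each coherent with $\mathcal H$; $\sigma_{\mathcal W}=\sigma_{\mathcal H}$, $\Upsilon_{\mathcal W}=\Upsilon_{\mathcal H}$, $\Delta_{\mathcal W}=\Delta_{\mathcal H}$, and the (extended) models of $\mathcal W$ are the (extended) models of $\mathcal H$. $\mathcal W_l$ is the set of ew-conditions in $\mathcal Z$ of level $l$; $\mathrm{Lev}(\mathcal W)$ is the set of levels of ew-conditions in $\mathcal Z$; for a non-greatest $l\in\mathrm{Lev}(\mathcal W)$, $l^{+}$ is the least element of $\mathrm{Lev}(\mathcal W)$ greater than $l$. Optimality. For a model $I$ of $\mathcal W$ let $\mathrm{cost}_l(I)=\sum_{B\in\mathcal W_l}[I\models B]$, and for an extended model $(I,\nu)$ let $\mathrm{ecost}_l(I,\nu)=\sum_{B\in\mathcal W_l}([I\models B]+[(I,\nu)\models B])$. Recursively downward over $l\in\mathrm{Lev}(\mathcal W)$: a model $I^*$ of $\mathcal W$ is $l$-optimal if $I^*\in R_l$ and $\mathrm{cost}_l(I^* )\ge\mathrm{cost}_l(I)$ for all $I\in R_l$, where $R_l$ is the set of all models of $\mathcal W$ if $l$ is the greatest level and the set of $l^+$-optimal models otherwise; $l$-min-optimal is defined the same way with $\le$ and with $R_l$ built from $l^+$-min-optimal models. A model is optimal (min-optimal) if it is $l$-optimal ($l$-min-optimal) for every $l\in\mathrm{Lev}(\mathcal W)$. Optimal, min-optimal, $l$-optimal and $l$-min-optimal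 extended models are defined identically using extended models and $\mathrm{ecost}_l$ in place of models and $\mathrm{cost}_l$. Logic programs. A rule over $\sigma$ has the form $a_0\leftarrow a_1,\dots,a_\ell,not\ a_{\ell+1},\dots,not\ a_m$ with each $a_i\in\sigma$ ($1\le i\le m$) and $a_0\in\sigma$ or $a_0=\bot$ (empty head). A program is a set of rules; $hd(\Pi)$ is the set of non-empty heads. A set $X$ of atoms satisfies the rule if it classically satisfies $a_1\wedge\dots\wedge a_\ell\wedge\neg a_{\ell+1}\wedge\dots\wedge\neg a_m\to a_0$ ($\bot$ being false). The reduct $\Pi^X$ is obtained by deleting every rule for which $X$ does not satisfy $\neg a_{\ell+1}\wedge\dots\wedge\neg a_m$ and replacing each remaining rule by $a_0\leftarrow a_1,\dots,a_\ell$. $X$ is an answer set of $\Pi$ if $X$ is a $\subseteq$-minimal set satisfying all rules of $\Pi^X$. $X$ is an input answer set of $\Pi$ if $X$ is an answer set of $\Pi\cup\{a\leftarrow\ : a\in X\setminus hd(\Pi)\}$. Constraints. A constraint over a specification $\langle V,D\rangle$ is $\langle t,R\rangle$ with $t=(x_1,\dots,x_k)$ a tuple of variables from $V$ and $R\subseteq D^k$; its complement $\overline{\langle t,R\rangle}$ is $\langle t,D^k\setminus R\rangle$; $\nu:V\to D$ satisfies it if $(\nu(x_1),\dots,\nu(x_k))\in R$ and solves a set of constraints if it satisfies each. A class $\mathcal C$ of constraints is a set of constraints over one specification. A vocabulary $\sigma$ is partitioned into regular atoms $\sigma_r$ and constraint atoms $\sigma_c$; a denotation is a function $\gamma:\sigma_c\to\mathcal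 C$. CAS programs. A CAS program over $\sigma,\mathcal C,\gamma$ is a set of rules over $\sigma$ whose heads are in $\sigma_r$ or are $\bot$. $At(P)$ is the set of atoms occurring in $P$, $At(P)_r=At(P)\cap\sigma_r$, $At(P)_c=At(P)\cap\sigma_c$. A set $X\subseteq At(P)$ is an answer set of $P$ if $X\cap At(P)_r\subseteq hd(P)$, $X$ is an input answer set of $P$, and the CSP $K(X)=\{\gamma(a):a\in X\cap At(P)_c\}\cup\{\overline{\gamma(a)}:a\in At(P)_c\setminus X\}$ has a solution; $(X,\nu)$ is an extended answer set of $P$ if $X$ is an answer set and $\nu:V\to D$ solves $K(X)$. The CAS-logic over $\sigma,\mathcal C,\gamma$ is the e-logic $(L,\sigma,D,V,\mathit{sem})$ with $L$ the set of CAS rules over $\sigma$ and $\mathit{sem}(P)$ the set of extended answer sets of $P$. $T_{\sigma,V,D}$ denotes an e-module (of any e-logic) with vocabulary $\sigma$, variables $V$, domain $D$ and $\mathit{sem}(T_{\sigma,V,D})=\mathit{Int}(\sigma,V,D)$. Minimize statements. The extended answer sets of $P$ ($P'$ plus the minimize statement) are those of $P'$. For an evaluation $\nu$ and level $l$ let $\Sigma^\nu_l=\sum_{i:l_i=l}(b_i\nu(x_i)+c_i)$. An extended answer set $(X',\nu')$ of $P$ dominates an extended answer set $(X,\nu)$ of $P$ if there is $l\in\{l_1,\dots,l_n\}$ such that $\Sigma^\nu_{l'}=\Sigma^{\nu'}_{l'}$ for every $l'\in\{l_1,\dots,l_n\}$ with $l'>l$, and $\Sigma^{\nu'}_l<\Sigma^\nu_l$.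 An extended answer set of $P$ is optimal if no extended answer set of $P$ dominates it. *)

theory Defs
  imports Complex_Main
begin

text \<open>Evaluations are partial maps; an evaluation \<open>\<nu> : V \<rightarrow> D\<close> is a map with
  \<open>dom \<nu> = V\<close> and \<open>ran \<nu> \<subseteq> D\<close>.  Restriction is \<open>\<nu> |` V'\<close>.
  All domains are sets of reals (needed anyway for costs).\<close>

definition Int_ext :: "'a set \<Rightarrow> 'v set \<Rightarrow> real set \<Rightarrow> ('a set \<times> ('v \<rightharpoonup> real)) set" where
  "Int_ext \<sigma> V D = {(I, \<nu>). I \<subseteq> \<sigma> \<and> dom \<nu> = V \<and> ran \<nu> \<subseteq> D}"

text \<open>An e-module is represented by the components of its e-logic that the theory
  uses: vocabulary, variables, domain and its semantics \<open>sem(T)\<close>.\<close>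

record ('a, 'v) emodule =
  evoc :: "'a set"
  evars :: "'v set"
  edom :: "real set"
  esem :: "('a set \<times> ('v \<rightharpoonup> real)) set"

definition ext_models :: "('a, 'v) emodule \<Rightarrow> 'a set \<Rightarrow> ('v \<rightharpoonup> real) \<Rightarrow> bool" where
  "ext_models T I \<nu> \<longleftrightarrow> (I \<inter> evoc T, \<nu> |` evars T) \<in> esem T"

definition model_of :: "'v set \<Rightarrow> real set \<Rightarrow> ('a, 'v) emodule \<Rightarrow> 'a set \<Rightarrow> bool" where
  "model_of V D T I \<longleftrightarrow> (\<exists>\<nu>. dom \<nu> = V \<and> ran \<nu> \<subseteq> D \<and> ext_models T I \<nu>)"

definition eams_voc :: "('a, 'v) emodule set \<Rightarrow> 'a set" where
  "eams_voc H = (\<Union>T\<in>H. evoc T)"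

definition eams_vars :: "('a, 'v) emodule set \<Rightarrow> 'v set" where
  "eams_vars H = (\<Union>T\<in>H. evars T)"

definition eams_dom :: "('a, 'v) emodule set \<Rightarrow> real set" where
  "eams_dom H = (\<Union>T\<in>H. edom T)"

definition eams_ext_model :: "('a, 'v) emodule set \<Rightarrow> 'a set \<Rightarrow> ('v \<rightharpoonup> real) \<Rightarrow> bool" where
  "eams_ext_model H I \<nu> \<longleftrightarrow>
     (I, \<nu>) \<in> Int_ext (eams_voc H) (eams_vars H) (eams_dom H) \<and> (\<forall>T\<in>H. ext_models T I \<nu>)"

record ('a, 'v) ewcond =
  cmod :: "('a, 'v) emodule"
  cw :: int
  ccoef :: "'v \<Rightarrow> real"
  clev :: nat

text \<open>\<open>[I \<Turnstile> B]\<close>, with "model" taken w.r.t. the variables/domain of the EAMS.\<close>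
definition cond_cost :: "'v set \<Rightarrow> real set \<Rightarrow> ('a, 'v) ewcond \<Rightarrow> 'a set \<Rightarrow> int" where
  "cond_cost V D B I = (if model_of V D (cmod B) I then cw B else 0)"

text \<open>\<open>[(I,\<nu>) \<Turnstile> B]\<close>; the (finite) sum ranges over the variables with non-zero
  coefficient (the other summands are 0).\<close>
definition cond_ext_cost :: "('a, 'v) ewcond \<Rightarrow> 'a set \<Rightarrow> ('v \<rightharpoonup> real) \<Rightarrow> real" where
  "cond_ext_cost B I \<nu> =
     (if ext_models (cmod B) I \<nu>
      then (\<Sum>x\<in>{x\<in>evars (cmod B). ccoef B x \<noteq> 0}. the (\<nu> x) * ccoef B x)
      else 0)"

definition ws_level :: "('a, 'v) ewcond set \<Rightarrow> nat \<Rightarrow> ('a, 'v) ewcond set" where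
  "ws_level Z l = {B\<in>Z. clev B = l}"

definition ws_levels :: "('a, 'v) ewcond set \<Rightarrow> nat set" where
  "ws_levels Z = clev ` Z"

definition ecost :: "('a, 'v) emodule set \<Rightarrow> ('a, 'v) ewcond set \<Rightarrow> nat
                     \<Rightarrow> 'a set \<Rightarrow> ('v \<rightharpoonup> real) \<Rightarrow> real" where
  "ecost H Z l I \<nu> =
     (\<Sum>B\<in>ws_level Z l. real_of_int (cond_cost (eams_vars H) (eams_dom H) B I) + cond_ext_cost B I \<nu>)"

definition min_step :: "('a, 'v) emodule set \<Rightarrow> ('a, 'v) ewcond set \<Rightarrow> nat
     \<Rightarrow> ('a set \<times> ('v \<rightharpoonup> real)) set \<Rightarrow> ('a set \<times> ('v \<rightharpoonup> real)) set" where
  "min_step H Z l R = {(I, \<nu>) \<in> R. \<forall>(J, \<mu>) \<in> R. ecost H Z l I \<nu> \<le> ecost H Z l J \<mu>}"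

text \<open>The set of \<open>l\<close>-min-optimal extended models: with \<open>[l, l\<^sup>+, l\<^sup>+\<^sup>+, \<dots>]\<close> the levels
  \<open>\<ge> l\<close> in increasing order, it is \<open>min_step l (min_step l\<^sup>+ (\<dots> (all extended models)))\<close>,
  i.e. \<open>R_l\<close> is the set of \<open>l\<^sup>+\<close>-min-optimal ones, or all extended models if \<open>l\<close> is greatest.\<close>
definition lmin_opt_set :: "('a, 'v) emodule set \<Rightarrow> ('a, 'v) ewcond set \<Rightarrow> nat
     \<Rightarrow> ('a set \<times> ('v \<rightharpoonup> real)) set" where
  "lmin_opt_set H Z l =
     foldr (min_step H Z) (filter (\<lambda>l'. l \<le> l') (sorted_list_of_set (ws_levels Z)))
       {(I, \<nu>). eams_ext_model H I \<nu>}"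

definition min_optimal_ext_model ::
  "('a, 'v) emodule set \<Rightarrow> ('a, 'v) ewcond set \<Rightarrow> 'a set \<Rightarrow> ('v \<rightharpoonup> real) \<Rightarrow> bool" where
  "min_optimal_ext_model H Z I \<nu> \<longleftrightarrow>
     eams_ext_model H I \<nu> \<and> (\<forall>l\<in>ws_levels Z. (I, \<nu>) \<in> lmin_opt_set H Z l)"

text \<open>\<open>rhead = None\<close> encodes the empty head \<open>\<bottom>\<close>.\<close>
datatype 'a rule = Rule (rhead: "'a option") (rpos: "'a list") (rneg: "'a list")

definition sat_rule :: "'a set \<Rightarrow> 'a rule \<Rightarrow> bool" where
  "sat_rule X r \<longleftrightarrow>
     (set (rpos r) \<subseteq> X \<and> set (rneg r) \<inter> X = {} \<longrightarrow>
       (case rhead r of None \<Rightarrow> False | Some a \<Rightarrow> a \<in> X))"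

definition sat_prog :: "'a set \<Rightarrow> 'a rule set \<Rightarrow> bool" where
  "sat_prog X \<Pi> \<longleftrightarrow> (\<forall>r\<in>\<Pi>. sat_rule X r)"

definition reduct :: "'a rule set \<Rightarrow> 'a set \<Rightarrow> 'a rule set" where
  "reduct \<Pi> X = {Rule (rhead r) (rpos r) [] | r. r \<in> \<Pi> \<and> set (rneg r) \<inter> X = {}}"

definition answer_set :: "'a rule set \<Rightarrow> 'a set \<Rightarrow> bool" where
  "answer_set \<Pi> X \<longleftrightarrow>
     sat_prog X (reduct \<Pi> X) \<and> (\<forall>Y. Y \<subseteq> X \<and> sat_prog Y (reduct \<Pi> X) \<longrightarrow> Y = X)"

definition heads :: "'a rule set \<Rightarrow> 'a set" where
  "heads \<Pi> = {a. \<exists>r\<in>\<Pi>. rhead r = Some a}"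

definition input_answer_set :: "'a rule set \<Rightarrow> 'a set \<Rightarrow> bool" where
  "input_answer_set \<Pi> X \<longleftrightarrow>
     answer_set (\<Pi> \<union> {Rule (Some a) [] [] | a. a \<in> X - heads \<Pi>}) X"

definition atoms :: "'a rule set \<Rightarrow> 'a set" where
  "atoms \<Pi> = (\<Union>r\<in>\<Pi>. set_option (rhead r) \<union> set (rpos r) \<union> set (rneg r))"

type_synonym 'v constr = "'v list \<times> real list set"

definition constraint_class :: "'v set \<Rightarrow> real set \<Rightarrow> 'v constr set \<Rightarrow> bool" where
  "constraint_class V D C \<longleftrightarrow>
     (\<forall>(t, R)\<in>C. set t \<subseteq> V \<and> (\<forall>xs\<in>R. length xs = length t \<and> set xs \<subseteq> D))"

definition compl_constr :: "real set \<Rightarrow> 'v constr \<Rightarrow> 'v constr" where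
  "compl_constr D c = (fst c, {xs. length xs = length (fst c) \<and> set xs \<subseteq> D} - snd c)"

definition sat_constr :: "('v \<rightharpoonup> real) \<Rightarrow> 'v constr \<Rightarrow> bool" where
  "sat_constr \<nu> c \<longleftrightarrow> map (\<lambda>x. the (\<nu> x)) (fst c) \<in> snd c"

definition solves :: "('v \<rightharpoonup> real) \<Rightarrow> 'v constr set \<Rightarrow> bool" where
  "solves \<nu> K \<longleftrightarrow> (\<forall>c\<in>K. sat_constr \<nu> c)"

definition cas_program :: "'a set \<Rightarrow> 'a set \<Rightarrow> 'a rule set \<Rightarrow> bool" where
  "cas_program \<sigma>r \<sigma>c P \<longleftrightarrow>
     (\<forall>r\<in>P. set (rpos r) \<union> set (rneg r) \<subseteq> \<sigma>r \<union> \<sigma>c \<and>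
            (case rhead r of None \<Rightarrow> True | Some a \<Rightarrow> a \<in> \<sigma>r))"

definition csp_K :: "'a set \<Rightarrow> real set \<Rightarrow> ('a \<Rightarrow> 'v constr) \<Rightarrow> 'a rule set \<Rightarrow> 'a set \<Rightarrow> 'v constr set" where
  "csp_K \<sigma>c D \<gamma> P X =
     {\<gamma> a | a. a \<in> X \<inter> (atoms P \<inter> \<sigma>c)} \<union> {compl_constr D (\<gamma> a) | a. a \<in> (atoms P \<inter> \<sigma>c) - X}"

definition cas_answer_set ::
  "'a set \<Rightarrow> 'a set \<Rightarrow> 'v set \<Rightarrow> real set \<Rightarrow> ('a \<Rightarrow> 'v constr) \<Rightarrow> 'a rule set \<Rightarrow> 'a set \<Rightarrow> bool" where
  "cas_answer_set \<sigma>r \<sigma>c V D \<gamma> P X \<longleftrightarrow>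
     X \<subseteq> atoms P \<and> X \<inter> (atoms P \<inter> \<sigma>r) \<subseteq> heads P \<and> input_answer_set P X \<and>
     (\<exists>\<nu>. dom \<nu> = V \<and> ran \<nu> \<subseteq> D \<and> solves \<nu> (csp_K \<sigma>c D \<gamma> P X))"

definition cas_ext_answer_set ::
  "'a set \<Rightarrow> 'a set \<Rightarrow> 'v set \<Rightarrow> real set \<Rightarrow> ('a \<Rightarrow> 'v constr) \<Rightarrow> 'a rule set
   \<Rightarrow> 'a set \<Rightarrow> ('v \<rightharpoonup> real) \<Rightarrow> bool" where
  "cas_ext_answer_set \<sigma>r \<sigma>c V D \<gamma> P X \<nu> \<longleftrightarrow>
     cas_answer_set \<sigma>r \<sigma>c V D \<gamma> P X \<and> dom \<nu> = V \<and> ran \<nu> \<subseteq> D \<and> solves \<nu> (csp_K \<sigma>c D \<gamma> P X)"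

definition cas_module ::
  "'a set \<Rightarrow> 'a set \<Rightarrow> 'v set \<Rightarrow> real set \<Rightarrow> ('a \<Rightarrow> 'v constr) \<Rightarrow> 'a rule set \<Rightarrow> ('a, 'v) emodule" where
  "cas_module \<sigma>r \<sigma>c V D \<gamma> P =
     \<lparr>evoc = \<sigma>r \<union> \<sigma>c, evars = V, edom = D,
      esem = {(X, \<nu>). cas_ext_answer_set \<sigma>r \<sigma>c V D \<gamma> P X \<nu>}\<rparr>"

definition T_full :: "'a set \<Rightarrow> 'v set \<Rightarrow> real set \<Rightarrow> ('a, 'v) emodule" where
  "T_full \<sigma> V D = \<lparr>evoc = \<sigma>, evars = V, edom = D, esem = Int_ext \<sigma> V D\<rparr>"

text \<open>A minimize statement is a list of entries \<open>(b_i, x_i, c_i, l_i)\<close>.\<close>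
type_synonym 'v minstmt = "(int \<times> 'v \<times> int \<times> nat) list"

definition min_levels :: "'v minstmt \<Rightarrow> nat set" where
  "min_levels ms = {l. \<exists>b x c. (b, x, c, l) \<in> set ms}"

definition lev_sum :: "'v minstmt \<Rightarrow> ('v \<rightharpoonup> real) \<Rightarrow> nat \<Rightarrow> real" where
  "lev_sum ms \<nu> l =
     (\<Sum>i | i < length ms \<and> snd (snd (snd (ms ! i))) = l.
        real_of_int (fst (ms ! i)) * the (\<nu> (fst (snd (ms ! i)))) + real_of_int (fst (snd (snd (ms ! i)))))"

definition dominates :: "'v minstmt \<Rightarrow> ('v \<rightharpoonup> real) \<Rightarrow> ('v \<rightharpoonup> real) \<Rightarrow> bool" where
  "dominates ms \<nu>' \<nu> \<longleftrightarrow>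
     (\<exists>l\<in>min_levels ms. (\<forall>l'\<in>min_levels ms. l' > l \<longrightarrow> lev_sum ms \<nu> l' = lev_sum ms \<nu>' l') \<and>
                        lev_sum ms \<nu>' l < lev_sum ms \<nu> l)"

text \<open>Optimal extended answer set of \<open>P\<close> = \<open>P'\<close> plus the minimize statement \<open>ms\<close>
  (the extended answer sets of \<open>P\<close> are those of \<open>P'\<close>).\<close>
definition optimal_ext_answer_set ::
  "'a set \<Rightarrow> 'a set \<Rightarrow> 'v set \<Rightarrow> real set \<Rightarrow> ('a \<Rightarrow> 'v constr) \<Rightarrow> 'a rule set \<Rightarrow> 'v minstmt
   \<Rightarrow> 'a set \<Rightarrow> ('v \<rightharpoonup> real) \<Rightarrow> bool" where
  "optimal_ext_answer_set \<sigma>r \<sigma>c V D \<gamma> P' ms X \<nu> \<longleftrightarrow>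
     cas_ext_answer_set \<sigma>r \<sigma>c V D \<gamma> P' X \<nu> \<and>
     \<not> (\<exists>X' \<nu>'. cas_ext_answer_set \<sigma>r \<sigma>c V D \<gamma> P' X' \<nu>' \<and> dominates ms \<nu>' \<nu>)"

text \<open>The set \<open>S\<close> of ew-conditions. \<open>c_l x = \<Sum>{b_i | l_i = l, x_i = x}\<close>, which under the
  distinctness hypothesis is \<open>b_i\<close> if \<open>x = x_i\<close>, \<open>l_i = l\<close>, and 0 otherwise.\<close>
definition w_lev :: "'v minstmt \<Rightarrow> nat \<Rightarrow> int" where
  "w_lev ms l = (\<Sum>i | i < length ms \<and> snd (snd (snd (ms ! i))) = l. fst (snd (snd (ms ! i))))"

definition c_lev :: "'v minstmt \<Rightarrow> nat \<Rightarrow> 'v \<Rightarrow> int" where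
  "c_lev ms l x =
     (\<Sum>i | i < length ms \<and> snd (snd (snd (ms ! i))) = l \<and> fst (snd (ms ! i)) = x. fst (ms ! i))"

definition min_conds :: "'a set \<Rightarrow> 'v set \<Rightarrow> real set \<Rightarrow> 'v minstmt \<Rightarrow> ('a, 'v) ewcond set" where
  "min_conds \<sigma> V D ms =
     (\<Union>l\<in>min_levels ms.
        {\<lparr>cmod = T_full \<sigma> V D, cw = w_lev ms l, ccoef = (\<lambda>_. 0), clev = l\<rparr>,
         \<lparr>cmod = T_full \<sigma> V D, cw = 0, ccoef = (\<lambda>x. real_of_int (c_lev ms l x)), clev = l\<rparr>})"

end

theory Submission
  imports Defs
begin

text \<open>Both notions are lexicographic minimisation over the levels, the highest level being the
  most significant.  On extended answer sets of \<open>P'\<close> every condition of \<open>S\<close> is satisfied, so the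
  \<open>l\<close>-th cost of \<open>(P', S)\<close> is \<open>w\<^sub>l + \<Sum>\<^sub>x c\<^sub>l(x) \<nu>(x)\<close>, which by the distinctness of the variables
  within a level is exactly \<open>\<Sigma>\<^sup>\<nu>\<^sub>l\<close>.  It remains to see that the level-by-level filtering defining
  min-optimality keeps precisely the elements that are not lexicographically dominated.\<close>

definition lex_less_on :: "'l::linorder set \<Rightarrow> ('l \<Rightarrow> 'b::linorder) \<Rightarrow> ('l \<Rightarrow> 'b) \<Rightarrow> bool" where
  "lex_less_on L u v \<longleftrightarrow> (\<exists>l\<in>L. u l < v l \<and> (\<forall>l'\<in>L. l < l' \<longrightarrow> u l' = v l'))"

lemma lex_less_on_cong:
  assumes "\<forall>l\<in>L. u l = u' l" "\<forall>l\<in>L. v l = v' l"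
  shows "lex_less_on L u v \<longleftrightarrow> lex_less_on L u' v'"
  using assms unfolding lex_less_on_def by auto

lemma lex_less_on_trichotomy:
  assumes "finite L"
  shows "lex_less_on L u v \<or> lex_less_on L v u \<or> (\<forall>l\<in>L. u l = v l)"
proof (rule ccontr)
  define M where "M = {l\<in>L. u l \<noteq> v l}"
  assume neither: "\<not> (lex_less_on L u v \<or> lex_less_on L v u \<or> (\<forall>l\<in>L. u l = v l))"
  then have "M \<noteq> {}" by (auto simp: M_def)
  moreover have "finite M" using assms by (simp add: M_def)
  ultimately have "Max M \<in> M" using Max_in by blast
  moreover have "\<forall>l\<in>L. Max M < l \<longrightarrow> u l = v l"
    using Max_ge[OF \<open>finite M\<close>] by (auto simp: M_def not_le[symmetric])
  ultimately have "lex_less_on L u v \<or> lex_less_on L v u"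
    unfolding lex_less_on_def M_def by (auto simp: neq_iff)
  with neither show False by blast
qed

lemma lex_less_on_insert_least:
  assumes "\<forall>l\<in>L. a < l"
  shows "lex_less_on (insert a L) u v \<longleftrightarrow> lex_less_on L u v \<or> ((\<forall>l\<in>L. u l = v l) \<and> u a < v a)"
  using assms unfolding lex_less_on_def by (auto; metis less_asym)

lemma lex_less_on_upper_levels:
  "(\<exists>l\<in>L. lex_less_on {l'\<in>L. l \<le> l'} u v) \<longleftrightarrow> lex_less_on L u v"
  unfolding lex_less_on_def by auto

lemma argmin_undominated_insert_least:
  fixes f :: "'e \<Rightarrow> 'l::linorder \<Rightarrow> 'b::linorder" and E :: "'e set" and L :: "'l set"
  assumes "finite L" "\<forall>l\<in>L. a < l"
  defines "R \<equiv> {x\<in>E. \<forall>y\<in>E. \<not> lex_less_on L (f y) (f x)}"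
  shows "{x\<in>R. \<forall>y\<in>R. f x a \<le> f y a} = {x\<in>E. \<forall>y\<in>E. \<not> lex_less_on (insert a L) (f y) (f x)}"
proof (intro set_eqI iffI)
  fix x assume "x \<in> {x\<in>R. \<forall>y\<in>R. f x a \<le> f y a}"
  then have x: "x \<in> R" and min: "\<forall>y\<in>R. f x a \<le> f y a" by auto
  have "\<not> lex_less_on (insert a L) (f y) (f x)" if "y \<in> E" for y
  proof
    assume "lex_less_on (insert a L) (f y) (f x)"
    moreover have "\<not> lex_less_on L (f y) (f x)" using x \<open>y \<in> E\<close> R_def by auto
    ultimately have eq: "\<forall>l\<in>L. f y l = f x l" and "f y a < f x a"
      using lex_less_on_insert_least[OF assms(2)] by auto
    have "lex_less_on L (f z) (f y) \<longleftrightarrow> lex_less_on L (f z) (f x)" for z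
      using eq by (intro lex_less_on_cong) auto
    then have "y \<in> R" using x \<open>y \<in> E\<close> R_def by auto
    then show False using min \<open>f y a < f x a\<close> by force
  qed
  then show "x \<in> {x\<in>E. \<forall>y\<in>E. \<not> lex_less_on (insert a L) (f y) (f x)}"
    using x R_def by auto
next
  fix x assume x: "x \<in> {x\<in>E. \<forall>y\<in>E. \<not> lex_less_on (insert a L) (f y) (f x)}"
  then have "x \<in> R" using lex_less_on_insert_least[OF assms(2)] R_def by auto
  moreover have "f x a \<le> f y a" if "y \<in> R" for y
  proof (rule ccontr)
    assume "\<not> f x a \<le> f y a"
    moreover have "\<forall>l\<in>L. f y l = f x l"
      using lex_less_on_trichotomy[OF assms(1), of "f y" "f x"] \<open>x \<in> R\<close> \<open>y \<in> R\<close> R_def by auto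
    ultimately have "lex_less_on (insert a L) (f y) (f x)"
      using lex_less_on_insert_least[OF assms(2)] by (auto simp: not_le)
    then show False using x \<open>y \<in> R\<close> R_def by auto
  qed
  ultimately show "x \<in> {x\<in>R. \<forall>y\<in>R. f x a \<le> f y a}" by auto
qed

lemma foldr_argmin_eq_undominated:
  fixes f :: "'e \<Rightarrow> 'l::linorder \<Rightarrow> 'b::linorder"
  assumes "sorted xs" "distinct xs"
  shows "foldr (\<lambda>l R. {x\<in>R. \<forall>y\<in>R. f x l \<le> f y l}) xs E
         = {x\<in>E. \<forall>y\<in>E. \<not> lex_less_on (set xs) (f y) (f x)}"
  using assms
proof (induction xs)
  case Nil
  then show ?case by (simp add: lex_less_on_def)
next
  case (Cons a xs)
  then have "\<forall>l\<in>set xs. a < l" by (auto simp: le_less)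
  with Cons show ?case
    using argmin_undominated_insert_least[of "set xs" a] by simp
qed

lemma min_optimal_ext_model_iff_undominated:
  assumes "finite (ws_levels Z)"
  shows "min_optimal_ext_model H Z I \<nu> \<longleftrightarrow> eams_ext_model H I \<nu> \<and>
           (\<forall>J \<mu>. eams_ext_model H J \<mu> \<longrightarrow>
              \<not> lex_less_on (ws_levels Z) (\<lambda>l. ecost H Z l J \<mu>) (\<lambda>l. ecost H Z l I \<nu>))"
proof -
  define E where "E = {(I, \<nu>). eams_ext_model H I \<nu>}"
  define f where "f p = (\<lambda>l. ecost H Z l (fst p) (snd p))" for p
  have "lmin_opt_set H Z l = {x\<in>E. \<forall>y\<in>E. \<not> lex_less_on {l'\<in>ws_levels Z. l \<le> l'} (f y) (f x)}"
    for l
  proof -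
    have "min_step H Z = (\<lambda>l R. {x\<in>R. \<forall>y\<in>R. f x l \<le> f y l})"
      unfolding min_step_def f_def by (auto simp: fun_eq_iff)
    moreover have "set (filter (\<lambda>l'. l \<le> l') (sorted_list_of_set (ws_levels Z)))
                   = {l'\<in>ws_levels Z. l \<le> l'}"
      using assms by auto
    ultimately show ?thesis
      unfolding lmin_opt_set_def E_def[symmetric]
      by (simp add: foldr_argmin_eq_undominated sorted_wrt_filter)
  qed
  then have "min_optimal_ext_model H Z I \<nu> \<longleftrightarrow> (I, \<nu>) \<in> E \<and>
      (\<forall>l\<in>ws_levels Z. \<forall>y\<in>E. \<not> lex_less_on {l'\<in>ws_levels Z. l \<le> l'} (f y) (f (I, \<nu>)))"
    unfolding min_optimal_ext_model_def by (auto simp: E_def)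
  also have "\<dots> \<longleftrightarrow> (I, \<nu>) \<in> E \<and> (\<forall>y\<in>E. \<not> lex_less_on (ws_levels Z) (f y) (f (I, \<nu>)))"
    using lex_less_on_upper_levels by blast
  finally show ?thesis by (simp add: E_def f_def)
qed

lemma restrict_map_dom: "dom \<nu> = V \<Longrightarrow> \<nu> |` V = \<nu>"
  by (auto simp: restrict_map_def fun_eq_iff)

lemma atoms_cas_program:
  "cas_program \<sigma>r \<sigma>c P \<Longrightarrow> atoms P \<subseteq> \<sigma>r \<union> \<sigma>c"
  unfolding cas_program_def atoms_def by (fastforce split: option.splits)

lemma eams_ext_model_cas_module_iff:
  assumes "cas_program \<sigma>r \<sigma>c P"
  shows "eams_ext_model {cas_module \<sigma>r \<sigma>c V D \<gamma> P} I \<nu> \<longleftrightarrow> cas_ext_answer_set \<sigma>r \<sigma>c V D \<gamma> P I \<nu>"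
proof -
  have "I \<subseteq> \<sigma>r \<union> \<sigma>c" if "cas_ext_answer_set \<sigma>r \<sigma>c V D \<gamma> P I \<nu>"
    using that atoms_cas_program[OF assms]
    by (auto simp: cas_ext_answer_set_def cas_answer_set_def)
  then show ?thesis
    by (auto simp: eams_ext_model_def Int_ext_def eams_voc_def eams_vars_def eams_dom_def
        ext_models_def cas_module_def restrict_map_dom Int_absorb2 cas_ext_answer_set_def)
qed

lemma ext_models_T_full: "dom \<nu> = V \<Longrightarrow> ran \<nu> \<subseteq> D \<Longrightarrow> ext_models (T_full \<sigma> V D) I \<nu>"
  by (auto simp: ext_models_def T_full_def Int_ext_def restrict_map_dom)

lemma finite_min_levels: "finite (min_levels ms)"
proof -
  have "min_levels ms = (\<lambda>t. snd (snd (snd t))) ` set ms"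
    unfolding min_levels_def by force
  then show ?thesis by simp
qed

lemma ws_levels_min_conds: "ws_levels (min_conds \<sigma> V D ms) = min_levels ms"
  unfolding ws_levels_def min_conds_def image_UN by auto

lemma ws_level_min_conds:
  assumes "l \<in> min_levels ms"
  shows "ws_level (min_conds \<sigma> V D ms) l =
    {\<lparr>cmod = T_full \<sigma> V D, cw = w_lev ms l, ccoef = (\<lambda>_. 0), clev = l\<rparr>,
     \<lparr>cmod = T_full \<sigma> V D, cw = 0, ccoef = (\<lambda>x. real_of_int (c_lev ms l x)), clev = l\<rparr>}"
  using assms unfolding ws_level_def min_conds_def by auto

definition distinct_per_level :: "'v minstmt \<Rightarrow> bool" where
  "distinct_per_level ms \<longleftrightarrow>
     (\<forall>i<length ms. \<forall>j<length ms. i \<noteq> j \<and> snd (snd (snd (ms ! i))) = snd (snd (snd (ms ! j)))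
        \<longrightarrow> fst (snd (ms ! i)) \<noteq> fst (snd (ms ! j)))"

lemma c_lev_nth:
  assumes "distinct_per_level ms" "i < length ms" "snd (snd (snd (ms ! i))) = l"
  shows "c_lev ms l (fst (snd (ms ! i))) = fst (ms ! i)"
proof -
  have "{j. j < length ms \<and> snd (snd (snd (ms ! j))) = l \<and> fst (snd (ms ! j)) = fst (snd (ms ! i))} = {i}"
    using assms by (auto simp: distinct_per_level_def)
  then show ?thesis unfolding c_lev_def by simp
qed

lemma c_lev_nonzero_imp_entry:
  "c_lev ms l x \<noteq> 0 \<Longrightarrow> \<exists>i<length ms. snd (snd (snd (ms ! i))) = l \<and> fst (snd (ms ! i)) = x"
  unfolding c_lev_def by (metis (mono_tags, lifting) empty_Collect_eq sum.empty)

lemma sum_c_lev_eq_sum_entries: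
  assumes dist: "distinct_per_level ms" and vars: "\<forall>i<length ms. fst (snd (ms ! i)) \<in> V"
  shows "(\<Sum>x\<in>{x\<in>V. real_of_int (c_lev ms l x) \<noteq> 0}. the (\<nu> x) * real_of_int (c_lev ms l x))
       = (\<Sum>i | i < length ms \<and> snd (snd (snd (ms ! i))) = l.
            real_of_int (fst (ms ! i)) * the (\<nu> (fst (snd (ms ! i)))))"
proof -
  define N where "N = {i. i < length ms \<and> snd (snd (snd (ms ! i))) = l}"
  define var where "var i = fst (snd (ms ! i))" for i
  define g where "g x = the (\<nu> x) * real_of_int (c_lev ms l x)" for x
  have "{x\<in>V. real_of_int (c_lev ms l x) \<noteq> 0} \<subseteq> var ` N"
    using c_lev_nonzero_imp_entry unfolding N_def var_def by fastforce
  then have "(\<Sum>x\<in>{x\<in>V. real_of_int (c_lev ms l x) \<noteq> 0}. g x) = (\<Sum>x\<in>var ` N. g x)"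
    by (intro sum.mono_neutral_left) (use vars in \<open>auto simp: g_def N_def var_def\<close>)
  also have "\<dots> = (\<Sum>i\<in>N. g (var i))"
  proof -
    have "inj_on var N"
    proof (rule inj_onI)
      fix i j assume "i \<in> N" "j \<in> N" "var i = var j"
      then show "i = j"
        using dist[unfolded distinct_per_level_def, rule_format, of i j] by (auto simp: N_def var_def)
    qed
    then show ?thesis by (simp add: sum.reindex)
  qed
  also have "\<dots> = (\<Sum>i\<in>N. real_of_int (fst (ms ! i)) * the (\<nu> (var i)))"
    by (rule sum.cong) (auto simp: g_def N_def var_def c_lev_nth[OF dist])
  finally show ?thesis unfolding g_def N_def var_def .
qed

lemma ecost_min_conds:
  assumes dist: "distinct_per_level ms" and vars: "\<forall>i<length ms. fst (snd (ms ! i)) \<in> V"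
    and l: "l \<in> min_levels ms"
    and \<nu>: "dom \<nu> = V" "ran \<nu> \<subseteq> D"
    and H: "eams_vars H = V" "eams_dom H = D"
  shows "ecost H (min_conds \<sigma> V D ms) l I \<nu> = lev_sum ms \<nu> l"
proof -
  define B1 where "B1 = \<lparr>cmod = T_full \<sigma> V D, cw = w_lev ms l, ccoef = (\<lambda>_. 0::real), clev = l\<rparr>"
  define B2 where "B2 = \<lparr>cmod = T_full \<sigma> V D, cw = 0, ccoef = (\<lambda>x. real_of_int (c_lev ms l x)), clev = l\<rparr>"
  define h where "h B = real_of_int (cond_cost V D B I) + cond_ext_cost B I \<nu>" for B
  have sat: "ext_models (T_full \<sigma> V D) I \<nu>" "model_of V D (T_full \<sigma> V D) I"
    using ext_models_T_full[OF \<nu>] \<nu> by (auto simp: model_of_def)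
  have h1: "h B1 = real_of_int (w_lev ms l)"
    using sat by (simp add: h_def B1_def cond_cost_def cond_ext_cost_def)
  have h2: "h B2 = (\<Sum>x\<in>{x\<in>V. real_of_int (c_lev ms l x) \<noteq> 0}. the (\<nu> x) * real_of_int (c_lev ms l x))"
    using sat by (simp add: h_def B2_def cond_cost_def cond_ext_cost_def T_full_def)
  have "sum h {B1, B2} = h B1 + h B2"
    \<comment> \<open>\<open>B1 = B2\<close> only if \<open>w\<^sub>l = 0\<close> and \<open>c\<^sub>l = 0\<close>, when both costs vanish\<close>
    using h1 h2 by (cases "B1 = B2") (auto simp: B1_def B2_def)
  then have "ecost H (min_conds \<sigma> V D ms) l I \<nu> = h B1 + h B2"
    unfolding ecost_def ws_level_min_conds[OF l] h_def B1_def B2_def H by simp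
  also have "\<dots> = lev_sum ms \<nu> l"
    unfolding h1 h2 sum_c_lev_eq_sum_entries[OF dist vars] lev_sum_def w_lev_def
    by (simp add: sum.distrib)
  finally show ?thesis .
qed

lemma dominates_iff_lex_less_on:
  "dominates ms \<nu>' \<nu> \<longleftrightarrow> lex_less_on (min_levels ms) (lev_sum ms \<nu>') (lev_sum ms \<nu>)"
  unfolding dominates_def lex_less_on_def by (auto simp: eq_commute)

theorem proposition3:
  fixes \<sigma>r \<sigma>c :: "'a set" and V :: "'v set" and D :: "real set"
    and C :: "'v constr set" and \<gamma> :: "'a \<Rightarrow> 'v constr"
    and P' :: "'a rule set" and ms :: "'v minstmt"
    and X :: "'a set" and \<nu> :: "'v \<rightharpoonup> real"
  assumes partition: "\<sigma>r \<inter> \<sigma>c = {}"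
    and cls: "constraint_class V D C"
    and den: "\<forall>a\<in>\<sigma>c. \<gamma> a \<in> C"
    and prog: "cas_program \<sigma>r \<sigma>c P'"
    and ms_vars: "\<forall>i<length ms. fst (snd (ms ! i)) \<in> V"
    and ms_levels: "\<forall>i<length ms. snd (snd (snd (ms ! i))) > 0"
    and ms_distinct: "\<forall>i<length ms. \<forall>j<length ms. i \<noteq> j \<and>
                        snd (snd (snd (ms ! i))) = snd (snd (snd (ms ! j))) \<longrightarrow>
                        fst (snd (ms ! i)) \<noteq> fst (snd (ms ! j))"
    and XI: "(X, \<nu>) \<in> Int_ext (\<sigma>r \<union> \<sigma>c) V D"
  shows "min_optimal_ext_model {cas_module \<sigma>r \<sigma>c V D \<gamma> P'} (min_conds (\<sigma>r \<union> \<sigma>c) V D ms) X \<nu>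
         \<longleftrightarrow> optimal_ext_answer_set \<sigma>r \<sigma>c V D \<gamma> P' ms X \<nu>"
proof -
  let ?H = "{cas_module \<sigma>r \<sigma>c V D \<gamma> P'}" and ?Z = "min_conds (\<sigma>r \<union> \<sigma>c) V D ms"
  let ?AS = "cas_ext_answer_set \<sigma>r \<sigma>c V D \<gamma> P'"
  have cost: "\<forall>l\<in>min_levels ms. ecost ?H ?Z l J \<mu> = lev_sum ms \<mu> l" if "?AS J \<mu>" for J \<mu>
    using that ms_distinct ms_vars ecost_min_conds[of ms V _ \<mu> D ?H]
    by (auto simp: cas_ext_answer_set_def distinct_per_level_def eams_vars_def eams_dom_def
        cas_module_def)
  have dominates: "lex_less_on (min_levels ms) (\<lambda>l. ecost ?H ?Z l J \<mu>) (\<lambda>l. ecost ?H ?Z l X \<nu>)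
                   \<longleftrightarrow> dominates ms \<mu> \<nu>" if "?AS J \<mu>" "?AS X \<nu>" for J \<mu>
    unfolding dominates_iff_lex_less_on using cost[OF that(1)] cost[OF that(2)]
    by (intro lex_less_on_cong) auto
  have "min_optimal_ext_model ?H ?Z X \<nu> \<longleftrightarrow> ?AS X \<nu> \<and> (\<forall>J \<mu>. ?AS J \<mu> \<longrightarrow>
          \<not> lex_less_on (min_levels ms) (\<lambda>l. ecost ?H ?Z l J \<mu>) (\<lambda>l. ecost ?H ?Z l X \<nu>))"
    using min_optimal_ext_model_iff_undominated[of ?Z ?H X \<nu>] finite_min_levels[of ms]
    unfolding ws_levels_min_conds eams_ext_model_cas_module_iff[OF prog] by blast
  also have "\<dots> \<longleftrightarrow> ?AS X \<nu> \<and> (\<forall>J \<mu>. ?AS J \<mu> \<longrightarrow> \<not> dominates ms \<mu> \<nu>)"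
    using dominates by blast
  finally show ?thesis
    unfolding optimal_ext_answer_set_def by blast
qed

end
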